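(* Fix a finite set $\Phi$ of $g$ groups and probabilities $p_{jk}\in[0,1]$ for $j,k\in\Phi$. For each $m$, let $V$ be a set of $m$ vertices, each assigned to a group by an arbitrary map $\varphi:V\to\Phi$, and let $\mathcal D$ be the random directed graph on $V$ in which each arc $(u,v)$, $u\ne v$, is present independently with probability $p_{\varphi(u)\varphi(v)}$. Let $\mathcal G$ be the undirected mutual-compatibility graph of $\mathcal D$ ($u,v$ adjacent iff both $(u,v)$ and $(v,u)$ are arcs). Then there is a constant $D>0$ depending only on $g$ and the $p_{jk}$ (not on $m$ or $\varphi$) such that $\mathbb E[\nu(\mathcal G)]\le D\log m$ for all $m\ge 2$, and $\Pr\big(\nu(\mathcal G)\le D\log m\big)\to 1$ as $m\to\infty$.
   Context: A set of odd cycles $\{c_1,\dots,c_l\}$ of an undirected graph is independent if the cycles are pairwise vertex-disjoint and no edge joins a vertex of $c_i$ to a vertex of $c_j$ for $i\ne j$; $\nu(\mathcal G)$ is the maximum size of an independent set of odd cycles of $\mathcal G$. *)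

theory Defs
  imports "HOL-Probability.Probability"
begin

text \<open>An odd cycle is recorded by its vertex set: a set C of vertices of V that can be listed
  as distinct vertices v_0, ..., v_(k-1), k odd, k at least 3, with consecutive vertices
  (cyclically) adjacent.\<close>

definition odd_cycle :: "'a set \<Rightarrow> ('a \<Rightarrow> 'a \<Rightarrow> bool) \<Rightarrow> 'a set \<Rightarrow> bool" where
  "odd_cycle V E C \<longleftrightarrow>
     (\<exists>xs. distinct xs \<and> odd (length xs) \<and> length xs \<ge> 3 \<and> set xs = C \<and> C \<subseteq> V \<and>
           (\<forall>i < length xs. E (xs ! i) (xs ! ((i + 1) mod length xs))))"

definition independent_odd_cycles :: "'a set \<Rightarrow> ('a \<Rightarrow> 'a \<Rightarrow> bool) \<Rightarrow> 'a set set \<Rightarrow> bool" where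
  "independent_odd_cycles V E F \<longleftrightarrow>
     (\<forall>C\<in>F. odd_cycle V E C) \<and>
     (\<forall>C\<in>F. \<forall>C'\<in>F. C \<noteq> C' \<longrightarrow> C \<inter> C' = {} \<and> (\<forall>u\<in>C. \<forall>v\<in>C'. \<not> E u v))"

definition nu :: "'a set \<Rightarrow> ('a \<Rightarrow> 'a \<Rightarrow> bool) \<Rightarrow> nat" where
  "nu V E = Max {card F | F. finite F \<and> independent_odd_cycles V E F}"

text \<open>Random directed graph on {0..<m}: arcs are a Boolean function on pairs; arc (u,v), u \<noteq> v,
  present independently with probability p (phi u) (phi v); no other arcs.\<close>
definition random_digraph :: "nat \<Rightarrow> (nat \<Rightarrow> 'g) \<Rightarrow> ('g \<Rightarrow> 'g \<Rightarrow> real) \<Rightarrow> (nat \<times> nat \<Rightarrow> bool) pmf" where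
  "random_digraph m phi p =
     Pi_pmf {(u, v). u < m \<and> v < m \<and> u \<noteq> v} False
       (\<lambda>(u, v). bernoulli_pmf (p (phi u) (phi v)))"

definition mutual_graph :: "(nat \<times> nat \<Rightarrow> bool) \<Rightarrow> nat \<Rightarrow> nat \<Rightarrow> bool" where
  "mutual_graph A u v \<longleftrightarrow> A (u, v) \<and> A (v, u)"

end

theory Submission
  imports Defs
begin

text \<open>
  Pick one mutual edge \<open>(u\<^sub>i, v\<^sub>i)\<close> in each cycle of a maximum independent family of odd
  cycles. If \<open>\<nu> > g\<^sup>2 (s - 1)\<close>, pigeonhole on the groups of the endpoints gives \<open>s\<close> such
  edges of one type \<open>(j, k)\<close>, and independence of the cycles forbids every mutual edge
  \<open>u\<^sub>i v\<^sub>i\<^sub>'\<close> with \<open>i \<noteq> i'\<close>. These \<open>s(s - 1)\<close> pairs use pairwise distinct arcs, so this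
  configuration has probability at most \<open>(1 - p\<^sub>j\<^sub>k p\<^sub>k\<^sub>j)\<^bsup>s(s - 1)\<^esup>\<close>, and probability 0 if
  \<open>p\<^sub>j\<^sub>k p\<^sub>k\<^sub>j = 0\<close>. A union bound over the at most \<open>m\<^bsup>2s\<^esup>\<close> configurations with
  \<open>s \<approx> C log m\<close> gives \<open>P(\<nu> > g\<^sup>2 (s - 1)) \<le> m\<^sup>-\<^sup>2\<close>; since \<open>\<nu> \<le> m\<close>, both claims follow.
\<close>

lemma prob_bernoulli_imp_not:
  assumes "0 \<le> q" "q \<le> 1"
  shows "measure_pmf.prob (bernoulli_pmf q) {b. c \<longrightarrow> \<not> b} = (if c then 1 - q else 1)"
proof (cases c)
  case True
  then have "{b. c \<longrightarrow> \<not> b} = {False}" by auto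
  then show ?thesis using True assms by (simp add: measure_pmf_single)
qed simp

text \<open>Since \<open>K\<close> and \<open>prod.swap ` K\<close> are disjoint, the events for different pairs of \<open>K\<close>
  involve disjoint sets of coordinates: condition on the coordinates in \<open>K\<close>.\<close>

lemma prob_Pi_pmf_no_mutual_pairs:
  fixes q :: "'a \<times> 'a \<Rightarrow> real"
  assumes I: "finite I" "K \<subseteq> I" "prod.swap ` K \<subseteq> I" and disj: "K \<inter> prod.swap ` K = {}"
    and q: "\<And>x. 0 \<le> q x \<and> q x \<le> 1"
  shows "measure_pmf.prob (Pi_pmf I False (\<lambda>x. bernoulli_pmf (q x)))
           {A. \<forall>x\<in>K. \<not> (A x \<and> A (prod.swap x))} = (\<Prod>x\<in>K. 1 - q x * q (prod.swap x))"
proof -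
  let ?B = "\<lambda>x. bernoulli_pmf (q x)"
  define X where "X = {A. \<forall>x\<in>K. \<not> (A x \<and> A (prod.swap x))}"
  define J where "J = I - K"
  define merge where "merge = (\<lambda>f g x. if x \<in> K then f x else g x :: bool)"
  have fin: "finite K" "finite J" using I finite_subset unfolding J_def by auto
  have "Pi_pmf I False ?B = Pi_pmf (K \<union> J) False ?B"
    using I unfolding J_def by (simp add: Un_absorb1)
  also have "\<dots> = map_pmf (\<lambda>(f, g). merge f g) (pair_pmf (Pi_pmf K False ?B) (Pi_pmf J False ?B))"
    unfolding merge_def using fin by (intro Pi_pmf_union) (auto simp: J_def)
  also have "\<dots> = bind_pmf (Pi_pmf K False ?B) (\<lambda>f. map_pmf (merge f) (Pi_pmf J False ?B))"
    by (simp add: pair_pmf_def map_bind_pmf map_pmf_def bind_assoc_pmf bind_return_pmf)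
  finally have split: "Pi_pmf I False ?B = \<dots>" .
  have fibre: "measure_pmf.prob (map_pmf (merge f) (Pi_pmf J False ?B)) X
      = (\<Prod>x\<in>K. if f x then 1 - q (prod.swap x) else 1)" for f
  proof -
    define S where "S = (\<lambda>y. {b. prod.swap y \<in> K \<longrightarrow> \<not> (f (prod.swap y) \<and> b)})"
    have "merge f -` X = Pi J S"
      using disj I unfolding X_def by (auto simp: merge_def S_def J_def Pi_def)
    then have "measure_pmf.prob (map_pmf (merge f) (Pi_pmf J False ?B)) X
        = (\<Prod>y\<in>J. measure_pmf.prob (?B y) (S y))"
      using fin by (simp add: measure_Pi_pmf_Pi)
    also have "\<dots> = (\<Prod>y\<in>prod.swap ` K. measure_pmf.prob (?B y) (S y))"
      using I disj by (intro prod.mono_neutral_right) (auto simp: J_def S_def)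
    also have "\<dots> = (\<Prod>x\<in>K. if f x then 1 - q (prod.swap x) else 1)"
      using q by (subst prod.reindex) (auto simp: S_def prob_bernoulli_imp_not)
    finally show ?thesis .
  qed
  have "measure_pmf.prob (Pi_pmf I False ?B) X
      = measure_pmf.expectation (Pi_pmf K False ?B) (\<lambda>f. \<Prod>x\<in>K. if f x then 1 - q (prod.swap x) else 1)"
    unfolding split measure_pmf_bind
    by (subst measure_pmf.measure_bind[where N="count_space UNIV"])
       (simp_all add: fibre measure_pmf_in_subprob_algebra del: measure_map_pmf)
  also have "\<dots> = (\<Prod>x\<in>K. measure_pmf.expectation (?B x) (\<lambda>b. if b then 1 - q (prod.swap x) else 1))"
    using q fin by (intro expectation_prod_Pi_pmf integrable_measure_pmf_finite) auto
  also have "\<dots> = (\<Prod>x\<in>K. 1 - q x * q (prod.swap x))"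
    using q by (intro prod.cong refl) (simp add: algebra_simps)
  finally show ?thesis unfolding X_def .
qed

lemma random_digraph_eq_Pi_pmf:
  "random_digraph m phi p = Pi_pmf {(u, v). u < m \<and> v < m \<and> u \<noteq> v} False
     (\<lambda>x. bernoulli_pmf (p (phi (fst x)) (phi (snd x))))"
  by (simp add: random_digraph_def case_prod_unfold)

lemma prob_random_digraph_no_mutual_pairs:
  assumes p: "\<And>j k. 0 \<le> p j k \<and> p j k \<le> 1"
    and K: "K \<subseteq> {(u, v). u < m \<and> v < m \<and> u \<noteq> v}" "K \<inter> prod.swap ` K = {}"
  shows "measure_pmf.prob (random_digraph m phi p) {A. \<forall>(u, v)\<in>K. \<not> mutual_graph A u v}
    = (\<Prod>(u, v)\<in>K. 1 - p (phi u) (phi v) * p (phi v) (phi u))"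
proof -
  have "finite {(u, v). u < m \<and> v < m \<and> u \<noteq> v}"
    by (rule finite_subset[of _ "{..<m} \<times> {..<m}"]) auto
  moreover have "prod.swap ` K \<subseteq> {(u, v). u < m \<and> v < m \<and> u \<noteq> v}"
    using K by auto
  ultimately show ?thesis
    unfolding random_digraph_eq_Pi_pmf mutual_graph_def
    using prob_Pi_pmf_no_mutual_pairs[OF _ K(1) _ K(2), of "\<lambda>x. p (phi (fst x)) (phi (snd x))"] p
    by (simp add: case_prod_unfold prod.swap_def)
qed

lemma prob_random_digraph_mutual:
  assumes p: "\<And>j k. 0 \<le> p j k \<and> p j k \<le> 1" and uv: "u < m" "v < m" "u \<noteq> v"
  shows "measure_pmf.prob (random_digraph m phi p) {A. mutual_graph A u v}
    = p (phi u) (phi v) * p (phi v) (phi u)"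
proof -
  have "measure_pmf.prob (random_digraph m phi p) {A. \<not> mutual_graph A u v}
      = 1 - p (phi u) (phi v) * p (phi v) (phi u)"
    using prob_random_digraph_no_mutual_pairs[OF p, of "{(u, v)}" m phi] uv by auto
  then show ?thesis
    using measure_pmf.prob_compl[of "{A. mutual_graph A u v}" "random_digraph m phi p"]
    by (simp add: Compl_eq_Diff_UNIV[symmetric] Collect_neg_eq[symmetric])
qed

definition disjoint_arcs :: "('a \<times> 'a) set \<Rightarrow> bool" where
  "disjoint_arcs M \<longleftrightarrow> (\<forall>e\<in>M. fst e \<noteq> snd e) \<and>
     (\<forall>e\<in>M. \<forall>e'\<in>M. e \<noteq> e' \<longrightarrow> {fst e, snd e} \<inter> {fst e', snd e'} = {})"

definition cross_pairs :: "('a \<times> 'a) set \<Rightarrow> ('a \<times> 'a) set" where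
  "cross_pairs M = {(fst e, snd e') | e e'. e \<in> M \<and> e' \<in> M \<and> e \<noteq> e'}"

text \<open>The trace of one edge from each of several independent odd cycles.\<close>

definition separated_matching :: "('a \<Rightarrow> 'a \<Rightarrow> bool) \<Rightarrow> ('a \<times> 'a) set \<Rightarrow> bool" where
  "separated_matching E M \<longleftrightarrow> disjoint_arcs M \<and> (\<forall>(u, v)\<in>M. E u v) \<and>
     (\<forall>(u, v)\<in>cross_pairs M. \<not> E u v)"

lemma card_off_diagonal:
  assumes "finite M"
  shows "card {(e, e'). e \<in> M \<and> e' \<in> M \<and> e \<noteq> e'} = card M * (card M - 1)"
proof -
  have "{(e, e'). e \<in> M \<and> e' \<in> M \<and> e \<noteq> e'} = M \<times> M - (\<lambda>e. (e, e)) ` M"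
    by auto
  moreover have "card ((\<lambda>e. (e, e)) ` M) = card M"
    by (rule card_image) (auto simp: inj_on_def)
  ultimately show ?thesis
    using assms by (simp add: card_Diff_subset card_cartesian_product diff_mult_distrib2 image_subset_iff)
qed

lemma card_cross_pairs:
  assumes "finite M" "disjoint_arcs M"
  shows "card (cross_pairs M) = card M * (card M - 1)"
proof -
  let ?off = "{(e, e'). e \<in> M \<and> e' \<in> M \<and> e \<noteq> e'}"
  have "cross_pairs M = (\<lambda>(e, e'). (fst e, snd e')) ` ?off"
    unfolding cross_pairs_def by force
  moreover have "inj_on (\<lambda>(e, e'). (fst e, snd e')) ?off"
    using assms(2) unfolding disjoint_arcs_def by (fastforce simp: inj_on_def)
  ultimately show ?thesis
    using card_off_diagonal[OF assms(1)] by (simp add: card_image)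
qed

lemma cross_pairs_disjoint_swap:
  assumes "disjoint_arcs M"
  shows "cross_pairs M \<inter> prod.swap ` cross_pairs M = {}"
  using assms unfolding disjoint_arcs_def cross_pairs_def by fastforce

lemma cross_pairs_subset_irrefl:
  assumes "disjoint_arcs M" "M \<subseteq> V \<times> V"
  shows "cross_pairs M \<subseteq> {(u, v). u \<in> V \<and> v \<in> V \<and> u \<noteq> v}"
  using assms unfolding disjoint_arcs_def cross_pairs_def by fastforce

lemma cross_pairs_image:
  "cross_pairs (f ` A) = {(fst (f a), snd (f a')) | a a'. a \<in> A \<and> a' \<in> A \<and> f a \<noteq> f a'}"
  unfolding cross_pairs_def by blast

lemma prob_separated_matching_le:
  fixes phi :: "nat \<Rightarrow> 'g"
  assumes p: "\<And>j k. 0 \<le> p j k \<and> p j k \<le> 1"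
    and M: "M \<subseteq> {..<m} \<times> {..<m}" "disjoint_arcs M"
    and type: "\<forall>(u, v)\<in>M. phi u = j \<and> phi v = k"
    and r: "0 < p j k * p k j \<Longrightarrow> 1 - p j k * p k j \<le> r" "0 \<le> r"
  shows "measure_pmf.prob (random_digraph m phi p) {A. separated_matching (mutual_graph A) M}
    \<le> r ^ (card M * (card M - 1))"
proof -
  let ?P = "measure_pmf.prob (random_digraph m phi p)" and ?Q = "p j k * p k j"
  have "finite M"
    using M(1) finite_subset by blast
  have "0 \<le> ?Q"
    using p by (simp add: mult_nonneg_nonneg)
  then consider "M = {}" | "?Q = 0" "M \<noteq> {}" | "0 < ?Q"
    by force
  then show ?thesis
  proof cases
    case 1
    then show ?thesis by simp
  next
    case 2
    then obtain u v where uv: "(u, v) \<in> M" by auto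
    have "?P {A. separated_matching (mutual_graph A) M} \<le> ?P {A. mutual_graph A u v}"
      using uv by (intro measure_pmf.finite_measure_mono) (auto simp: separated_matching_def)
    also have "\<dots> = ?Q"
      using uv M type p by (subst prob_random_digraph_mutual) (auto simp: disjoint_arcs_def)
    finally show ?thesis
      using 2 r(2) by (simp add: order_trans)
  next
    case 3
    have "?P {A. separated_matching (mutual_graph A) M}
        \<le> ?P {A. \<forall>(u, v)\<in>cross_pairs M. \<not> mutual_graph A u v}"
      by (intro measure_pmf.finite_measure_mono) (auto simp: separated_matching_def)
    also have "\<dots> = (\<Prod>(u, v)\<in>cross_pairs M. 1 - p (phi u) (phi v) * p (phi v) (phi u))"
      using M by (intro prob_random_digraph_no_mutual_pairs p cross_pairs_disjoint_swap)
        (auto dest!: cross_pairs_subset_irrefl[of M "{..<m}"])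
    also have "\<dots> = (\<Prod>_\<in>cross_pairs M. 1 - ?Q)"
    proof (intro prod.cong refl)
      fix x assume "x \<in> cross_pairs M"
      then have "phi (fst x) = j \<and> phi (snd x) = k"
        using type unfolding cross_pairs_def by auto
      then show "(case x of (u, v) \<Rightarrow> 1 - p (phi u) (phi v) * p (phi v) (phi u)) = 1 - ?Q"
        by (simp add: case_prod_unfold)
    qed
    also have "\<dots> \<le> r ^ card (cross_pairs M)"
      using r(1)[OF 3] p by (simp add: power_mono mult_le_one)
    finally show ?thesis
      using card_cross_pairs[OF \<open>finite M\<close> M(2)] by simp
  qed
qed

lemma odd_cycle_has_edge:
  assumes "odd_cycle V E C"
  obtains u v where "u \<in> C" "v \<in> C" "u \<noteq> v" "E u v"
proof -
  obtain xs where xs: "distinct xs" "length xs \<ge> 3" "set xs = C"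
    "\<forall>i < length xs. E (xs ! i) (xs ! ((i + 1) mod length xs))"
    using assms unfolding odd_cycle_def by blast
  have "E (xs ! 0) (xs ! 1)"
    using xs(2,4) by force
  moreover have "xs ! 0 \<noteq> xs ! 1"
    using nth_eq_iff_index_eq[OF xs(1), of 0 1] xs(2) by (simp del: length_greater_0_conv)
  moreover have "xs ! 0 \<in> C" "xs ! 1 \<in> C"
    using xs(2,3) nth_mem[of 0 xs] nth_mem[of 1 xs] by (auto simp del: length_greater_0_conv)
  ultimately show thesis
    using that by blast
qed

lemma odd_cycle_subset: "odd_cycle V E C \<Longrightarrow> C \<subseteq> V"
  by (auto simp: odd_cycle_def)

lemma card_le_if_independent_odd_cycles:
  assumes "finite V" "independent_odd_cycles V E F"
  shows "card F \<le> card V"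
proof -
  have cycles: "\<And>C. C \<in> F \<Longrightarrow> odd_cycle V E C"
    using assms(2) unfolding independent_odd_cycles_def by blast
  then have sub: "\<And>C. C \<in> F \<Longrightarrow> C \<subseteq> V"
    by (rule odd_cycle_subset)
  have nonempty: "\<And>C. C \<in> F \<Longrightarrow> C \<noteq> {}"
    using cycles odd_cycle_has_edge by blast
  have "card F = (\<Sum>C\<in>F. 1)"
    by simp
  also have "\<dots> \<le> (\<Sum>C\<in>F. card C)"
    using assms(1) sub nonempty by (intro sum_mono) (auto simp: Suc_le_eq card_gt_0_iff intro: finite_subset)
  also have "\<dots> = card (\<Union>F)"
    using assms sub by (intro card_Union_disjoint[symmetric])
      (auto simp: pairwise_def disjnt_def independent_odd_cycles_def intro: finite_subset)
  also have "\<dots> \<le> card V"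
    using assms(1) sub by (intro card_mono) auto
  finally show ?thesis .
qed

lemma
  assumes "finite V"
  shows nu_attained: "\<exists>F. finite F \<and> independent_odd_cycles V E F \<and> card F = nu V E"
    and nu_le_card: "nu V E \<le> card V"
proof -
  let ?S = "{card F | F. finite F \<and> independent_odd_cycles V E F}"
  have bounded: "?S \<subseteq> {..card V}"
    using card_le_if_independent_odd_cycles[OF assms] by auto
  then have "finite ?S"
    using finite_subset by blast
  moreover have "card {} \<in> ?S"
    by (force simp: independent_odd_cycles_def)
  ultimately have "Max ?S \<in> ?S"
    by (intro Max_in) auto
  then show "\<exists>F. finite F \<and> independent_odd_cycles V E F \<and> card F = nu V E" "nu V E \<le> card V"
    using bounded unfolding nu_def by auto
qed

lemma exists_large_fibre:
  assumes "finite A" "finite B" "f ` A \<subseteq> B" "card B * n < card A"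
  shows "\<exists>y\<in>B. n < card {x\<in>A. f x = y}"
proof -
  have "B \<noteq> {}"
    using assms(3,4) by auto
  then obtain y where y: "y \<in> B" "card A \<le> card (f -` {y} \<inter> A) * card B"
    using pigeonhole_card[of f A B] assms(1-3) by blast
  then have "card B * n < card B * card (f -` {y} \<inter> A)"
    using assms(4) by (metis mult.commute order_less_le_trans)
  then have "n < card (f -` {y} \<inter> A)"
    by simp
  moreover have "f -` {y} \<inter> A = {x\<in>A. f x = y}"
    by auto
  ultimately show ?thesis
    using y(1) by auto
qed

lemma separated_matching_image:
  fixes edge :: "'a set \<Rightarrow> 'a \<times> 'a"
  assumes edge: "\<And>C. C \<in> F \<Longrightarrow> fst (edge C) \<in> C \<and> snd (edge C) \<in> C \<and>
      fst (edge C) \<noteq> snd (edge C) \<and> E (fst (edge C)) (snd (edge C))"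
    and separated: "\<And>C C'. C \<in> F \<Longrightarrow> C' \<in> F \<Longrightarrow> C \<noteq> C' \<Longrightarrow>
      C \<inter> C' = {} \<and> (\<forall>u\<in>C. \<forall>v\<in>C'. \<not> E u v)"
  shows "inj_on edge F" and "separated_matching E (edge ` F)"
proof -
  have disjoint_ends: "{fst (edge C), snd (edge C)} \<inter> {fst (edge C'), snd (edge C')} = {}"
    if "C \<in> F" "C' \<in> F" "C \<noteq> C'" for C C'
  proof -
    have "{fst (edge C), snd (edge C)} \<subseteq> C" "{fst (edge C'), snd (edge C')} \<subseteq> C'"
      using edge that by auto
    then show ?thesis
      using separated[OF that] by blast
  qed
  show "inj_on edge F"
  proof (rule inj_onI, rule ccontr)
    fix C C' assume "C \<in> F" "C' \<in> F" "edge C = edge C'" "C \<noteq> C'"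
    then show False
      using disjoint_ends[of C C'] by simp
  qed
  have "disjoint_arcs (edge ` F)"
    unfolding disjoint_arcs_def
  proof (intro conjI ballI impI)
    fix e assume "e \<in> edge ` F"
    then obtain C where "C \<in> F" "e = edge C"
      by blast
    then show "fst e \<noteq> snd e"
      using edge by simp
  next
    fix e e' assume e: "e \<in> edge ` F" "e' \<in> edge ` F" "e \<noteq> e'"
    then obtain C C' where "C \<in> F" "C' \<in> F" "e = edge C" "e' = edge C'"
      by blast
    moreover from this have "C \<noteq> C'"
      using e(3) by blast
    ultimately show "{fst e, snd e} \<inter> {fst e', snd e'} = {}"
      using disjoint_ends by simp
  qed
  moreover have "\<forall>(u, v)\<in>edge ` F. E u v"
    using edge by (simp add: case_prod_unfold)
  moreover have "\<not> E (fst (edge C)) (snd (edge C'))"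
    if "C \<in> F" "C' \<in> F" "edge C \<noteq> edge C'" for C C'
  proof -
    have "C \<noteq> C'"
      using that(3) by blast
    then show ?thesis
      using separated[OF that(1,2)] edge[OF that(1)] edge[OF that(2)] by blast
  qed
  then have "\<forall>(u, v)\<in>cross_pairs (edge ` F). \<not> E u v"
    unfolding cross_pairs_image by auto
  ultimately show "separated_matching E (edge ` F)"
    unfolding separated_matching_def by blast
qed

lemma odd_cycles_choose_edge:
  assumes "\<And>C. C \<in> F \<Longrightarrow> odd_cycle V E C"
  obtains edge where "\<And>C. C \<in> F \<Longrightarrow> fst (edge C) \<in> C \<and> snd (edge C) \<in> C \<and>
    fst (edge C) \<noteq> snd (edge C) \<and> E (fst (edge C)) (snd (edge C))"
proof -
  define is_edge where
    "is_edge = (\<lambda>C e. fst e \<in> C \<and> snd e \<in> C \<and> fst e \<noteq> snd e \<and> E (fst e) (snd e))"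
  have chosen: "is_edge C (SOME e. is_edge C e)" if C: "C \<in> F" for C
  proof -
    obtain u v where "u \<in> C" "v \<in> C" "u \<noteq> v" "E u v"
      using odd_cycle_has_edge[OF assms[OF C]] .
    then have "is_edge C (u, v)"
      unfolding is_edge_def by simp
    then show ?thesis
      by (rule someI)
  qed
  show thesis
    by (rule that[of "\<lambda>C. SOME e. is_edge C e"]) (use chosen in \<open>simp add: is_edge_def\<close>)
qed

lemma separated_matching_if_nu_gt:
  fixes phi :: "'a \<Rightarrow> 'g::finite"
  assumes "finite V" "CARD('g \<times> 'g) * (s - 1) < nu V E"
  obtains M j k where "M \<subseteq> V \<times> V" "card M = s" "separated_matching E M"
    "\<forall>(u, v)\<in>M. phi u = j \<and> phi v = k"
proof -
  obtain F where F: "finite F" "independent_odd_cycles V E F" "card F = nu V E"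
    using nu_attained[OF assms(1)] by blast
  have cycles: "\<And>C. C \<in> F \<Longrightarrow> odd_cycle V E C"
    and separated: "\<And>C C'. C \<in> F \<Longrightarrow> C' \<in> F \<Longrightarrow> C \<noteq> C' \<Longrightarrow>
      C \<inter> C' = {} \<and> (\<forall>u\<in>C. \<forall>v\<in>C'. \<not> E u v)"
    using F(2) unfolding independent_odd_cycles_def by auto
  obtain edge where edge: "\<And>C. C \<in> F \<Longrightarrow> fst (edge C) \<in> C \<and> snd (edge C) \<in> C \<and>
      fst (edge C) \<noteq> snd (edge C) \<and> E (fst (edge C)) (snd (edge C))"
    using odd_cycles_choose_edge[OF cycles] by blast
  define type where "type = (\<lambda>C. (phi (fst (edge C)), phi (snd (edge C))))"
  obtain t where "s - 1 < card {C\<in>F. type C = t}"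
    using exists_large_fibre[of F UNIV type "s - 1"] F assms(2) by auto
  then have "s \<le> card {C\<in>F. type C = t}"
    by linarith
  then obtain F' where F': "F' \<subseteq> {C\<in>F. type C = t}" "card F' = s"
    by (rule obtain_subset_with_card_n)
  then have "F' \<subseteq> F"
    by blast
  note matching = separated_matching_image[of F' edge E,
      OF edge[OF subsetD[OF \<open>F' \<subseteq> F\<close>]] separated[OF subsetD[OF \<open>F' \<subseteq> F\<close>] subsetD[OF \<open>F' \<subseteq> F\<close>]]]
  show thesis
  proof (rule that)
    show "edge ` F' \<subseteq> V \<times> V"
    proof (rule image_subsetI)
      fix C assume "C \<in> F'"
      then have "C \<in> F"
        using \<open>F' \<subseteq> F\<close> by blast
      then have "C \<subseteq> V" "fst (edge C) \<in> C" "snd (edge C) \<in> C"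
        using cycles odd_cycle_subset edge by blast+
      then show "edge C \<in> V \<times> V"
        by (simp add: mem_Times_iff subset_iff)
    qed
    show "card (edge ` F') = s"
      using matching(1) F'(2) by (simp add: card_image)
    show "separated_matching E (edge ` F')"
      by (rule matching(2))
    show "\<forall>(u, v)\<in>edge ` F'. phi u = fst t \<and> phi v = snd t"
      using F'(1) unfolding type_def by auto
  qed
qed

lemma card_subsets_le_power:
  assumes "finite A"
  shows "card {B. B \<subseteq> A \<and> card B = k} \<le> card A ^ k"
  using n_subsets[OF assms, of k] binomial_le_pow[of k "card A"]
  by (cases "k \<le> card A") (auto simp: binomial_eq_0)

lemma prob_nu_gt_le:
  fixes p :: "'g::finite \<Rightarrow> 'g \<Rightarrow> real"
  assumes p: "\<And>j k. 0 \<le> p j k \<and> p j k \<le> 1"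
    and r: "\<And>j k. 0 < p j k * p k j \<Longrightarrow> 1 - p j k * p k j \<le> r" "0 \<le> r"
  shows "measure_pmf.prob (random_digraph m phi p)
      {A. CARD('g \<times> 'g) * (s - 1) < nu {0..<m} (mutual_graph A)}
    \<le> real m ^ (2 * s) * r ^ (s * (s - 1))"
proof -
  let ?P = "measure_pmf.prob (random_digraph m phi p)"
  define Ms where "Ms = {M. M \<subseteq> {..<m} \<times> {..<m} \<and> card M = s \<and> disjoint_arcs M \<and>
    (\<exists>j k. \<forall>(u, v)\<in>M. phi u = j \<and> phi v = k)}"
  have subsets: "Ms \<subseteq> {M. M \<subseteq> {..<m} \<times> {..<m} \<and> card M = s}"
    unfolding Ms_def by blast
  then have "finite Ms"
    by (rule finite_subset) auto
  have "card Ms \<le> card ({..<m} \<times> {..<m}) ^ s"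
    using card_mono[OF _ subsets] card_subsets_le_power[of "{..<m} \<times> {..<m}" s] by simp
  then have card_Ms: "card Ms \<le> m ^ (2 * s)"
    by (simp add: power_mult power_mult_distrib power2_eq_square)
  have "{A. CARD('g \<times> 'g) * (s - 1) < nu {0..<m} (mutual_graph A)}
      \<subseteq> (\<Union>M\<in>Ms. {A. separated_matching (mutual_graph A) M})"
  proof
    fix A assume "A \<in> {A. CARD('g \<times> 'g) * (s - 1) < nu {0..<m} (mutual_graph A)}"
    then obtain M j k where "M \<subseteq> {0..<m} \<times> {0..<m}" "card M = s"
        "separated_matching (mutual_graph A) M" "\<forall>(u, v)\<in>M. phi u = j \<and> phi v = k"
      using separated_matching_if_nu_gt[of "{0..<m}" s "mutual_graph A" phi] by auto
    then show "A \<in> (\<Union>M\<in>Ms. {A. separated_matching (mutual_graph A) M})"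
      unfolding Ms_def separated_matching_def by (auto simp: atLeast0LessThan)
  qed
  then have "?P {A. CARD('g \<times> 'g) * (s - 1) < nu {0..<m} (mutual_graph A)}
      \<le> ?P (\<Union>M\<in>Ms. {A. separated_matching (mutual_graph A) M})"
    by (rule measure_pmf.finite_measure_mono) simp
  also have "\<dots> \<le> (\<Sum>M\<in>Ms. ?P {A. separated_matching (mutual_graph A) M})"
    using \<open>finite Ms\<close> by (rule measure_pmf.finite_measure_subadditive_finite) simp
  also have "\<dots> \<le> (\<Sum>M\<in>Ms. r ^ (s * (s - 1)))"
  proof (rule sum_mono)
    fix M assume "M \<in> Ms"
    then show "?P {A. separated_matching (mutual_graph A) M} \<le> r ^ (s * (s - 1))"
      unfolding Ms_def using prob_separated_matching_le[OF p, where M = M and m = m and phi = phi] r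
      by auto
  qed
  also have "\<dots> \<le> real m ^ (2 * s) * r ^ (s * (s - 1))"
    using card_Ms r(2) by (simp add: mult_right_mono flip: of_nat_power)
  finally show ?thesis .
qed

lemma power_times_power_le_inverse_square:
  fixes x r :: real
  assumes x: "2 \<le> x" and r: "0 < r" "r < 1"
    and s: "2 \<le> s" "3 * ln x / - ln r \<le> real (s - 1)"
  shows "x ^ (2 * s) * r ^ (s * (s - 1)) \<le> 1 / x ^ 2"
proof -
  have "0 < - ln r"
    using r by simp
  then have "3 * ln x \<le> real (s - 1) * - ln r"
    using s(2) by (simp only: pos_divide_le_eq)
  have "r ^ (s - 1) = exp (real (s - 1) * ln r)"
    using r by (simp add: exp_of_nat_mult)
  also have "\<dots> \<le> exp (- (3 * ln x))"
    using \<open>3 * ln x \<le> real (s - 1) * - ln r\<close> by simp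
  also have "\<dots> = 1 / x ^ 3"
    using x by (simp add: exp_minus exp_of_nat_mult[of 3, simplified] inverse_eq_divide)
  finally have r_pow: "r ^ (s - 1) \<le> 1 / x ^ 3" .
  have "x ^ (2 * s) * r ^ (s * (s - 1)) = (x\<^sup>2 * r ^ (s - 1)) ^ s"
    by (simp add: power_mult power_mult_distrib mult.commute[of s])
  also have "\<dots> \<le> (x\<^sup>2 * (1 / x ^ 3)) ^ s"
    using r_pow r by (intro power_mono mult_left_mono) auto
  also have "\<dots> = (1 / x) ^ s"
    using x by (simp add: power2_eq_square power3_eq_cube)
  also have "\<dots> \<le> (1 / x) ^ 2"
    using x s(1) by (intro power_decreasing) auto
  finally show ?thesis
    by (simp add: power_one_over)
qed

lemma expectation_le_threshold_plus_tail:
  fixes f :: "'a \<Rightarrow> real"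
  assumes f: "\<And>x. 0 \<le> f x" "\<And>x. f x \<le> b" and t: "0 \<le> t"
  shows "measure_pmf.expectation M f \<le> t + b * measure_pmf.prob M {x. t < f x}"
proof -
  let ?g = "\<lambda>x. t + b * indicator {x. t < f x} x"
  have "b \<ge> 0"
    using f order_trans by blast
  have "integrable M f"
    using f by (intro measure_pmf.integrable_const_bound[where B = b]) auto
  moreover have "integrable M ?g"
    using \<open>b \<ge> 0\<close> t by (intro measure_pmf.integrable_const_bound[where B = "t + b"])
      (auto simp: indicator_def)
  moreover have "f x \<le> ?g x" for x
    using f(2)[of x] t by (auto simp: indicator_def)
  ultimately have "measure_pmf.expectation M f \<le> measure_pmf.expectation M ?g"
    by (rule integral_mono)
  also have "\<dots> = t + b * measure_pmf.prob M {x. t < f x}"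
    by (subst Bochner_Integration.integral_add)
      (auto simp: measure_pmf.emeasure_eq_measure intro!: measure_pmf.integrable_const_bound[where B = 1])
  finally show ?thesis .
qed

lemma obtain_mutual_gap:
  fixes p :: "'g::finite \<Rightarrow> 'g \<Rightarrow> real"
  obtains r where "0 < r" "r < 1" "\<And>j k. 0 < p j k * p k j \<Longrightarrow> 1 - p j k * p k j \<le> r"
proof
  define R where "R = insert (1 / 2) ((\<lambda>(j, k). 1 - p j k * p k j) ` {(j, k). 0 < p j k * p k j})"
  have "finite R"
    unfolding R_def by simp
  then show "0 < Max R" "Max R < 1"
    using Max_in[of R] by (auto simp: R_def Max_gr_iff)
  show "1 - p j k * p k j \<le> Max R" if "0 < p j k * p k j" for j k
    using \<open>finite R\<close> that by (intro Max_ge) (auto simp: R_def)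
qed

lemma nu_tail_threshold:
  fixes p :: "'g::finite \<Rightarrow> 'g \<Rightarrow> real"
  assumes p: "\<And>j k. 0 \<le> p j k \<and> p j k \<le> 1"
    and r: "\<And>j k. 0 < p j k * p k j \<Longrightarrow> 1 - p j k * p k j \<le> r" "0 < r" "r < 1"
    and m: "2 \<le> m"
  defines "D \<equiv> CARD('g \<times> 'g) * (3 / - ln r + 4) + 2"
  obtains T where "real T + 1 \<le> D * ln (real m)"
    "measure_pmf.prob (random_digraph m phi p) {A. T < nu {0..<m} (mutual_graph A)} \<le> 1 / real m ^ 2"
proof
  define L where "L = ln (real m)"
  \<comment> \<open>chosen so that \<open>r\<^bsup>s - 1\<^esup> \<le> m\<^sup>-\<^sup>3\<close>, which beats the \<open>m\<^bsup>2s\<^esup>\<close> terms of the union bound\<close>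
  define s where "s = nat \<lceil>3 * L / - ln r\<rceil> + 2"
  define T where "T = CARD('g \<times> 'g) * (s - 1)"
  have "1 / 2 \<le> L"
  proof -
    have "ln (1 / 2 :: real) \<le> 1 / 2 - 1"
      by (rule ln_le_minus_one) simp
    then have "1 / 2 \<le> ln (2 :: real)"
      by (simp add: ln_div)
    also have "\<dots> \<le> L"
      unfolding L_def using m by simp
    finally show ?thesis .
  qed
  have "0 \<le> 3 * L / - ln r"
    using \<open>1 / 2 \<le> L\<close> r by (intro divide_nonneg_pos) auto
  then have "real (s - 1) = of_int \<lceil>3 * L / - ln r\<rceil> + 1"
    unfolding s_def by simp
  then have s: "3 * L / - ln r \<le> real (s - 1)" "real (s - 1) \<le> 3 * L / - ln r + 2"
    using le_of_int_ceiling[of "3 * L / - ln r"] of_int_ceiling_le_add_one[of "3 * L / - ln r"]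
    by linarith+
  have "real T \<le> CARD('g \<times> 'g) * (3 * L / - ln r + 2)"
    unfolding T_def using s(2) by (simp add: mult_left_mono)
  also have "\<dots> \<le> CARD('g \<times> 'g) * (3 / - ln r + 4) * L"
    using \<open>1 / 2 \<le> L\<close> by (simp add: algebra_simps mult_left_mono)
  finally show "real T + 1 \<le> D * ln (real m)"
    unfolding D_def L_def[symmetric] using \<open>1 / 2 \<le> L\<close> by (simp add: algebra_simps)
  have "measure_pmf.prob (random_digraph m phi p) {A. T < nu {0..<m} (mutual_graph A)}
      \<le> real m ^ (2 * s) * r ^ (s * (s - 1))"
    using prob_nu_gt_le[of p r m phi s, OF p r(1)] r(2) unfolding T_def by simp
  also have "\<dots> \<le> 1 / real m ^ 2"
    using m r s(1) unfolding L_def by (intro power_times_power_le_inverse_square) (auto simp: s_def)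
  finally show "measure_pmf.prob (random_digraph m phi p) {A. T < nu {0..<m} (mutual_graph A)}
      \<le> 1 / real m ^ 2" .
qed

lemma nu_log_bounds:
  fixes p :: "'g::finite \<Rightarrow> 'g \<Rightarrow> real"
  assumes p: "\<And>j k. 0 \<le> p j k \<and> p j k \<le> 1"
    and r: "\<And>j k. 0 < p j k * p k j \<Longrightarrow> 1 - p j k * p k j \<le> r" "0 < r" "r < 1"
    and m: "2 \<le> m"
  defines "D \<equiv> CARD('g \<times> 'g) * (3 / - ln r + 4) + 2"
  shows "measure_pmf.expectation (random_digraph m phi p) (\<lambda>A. real (nu {0..<m} (mutual_graph A)))
      \<le> D * ln (real m)"
    and "1 - 1 / real m ^ 2 \<le> measure_pmf.prob (random_digraph m phi p)
      {A. real (nu {0..<m} (mutual_graph A)) \<le> D * ln (real m)}"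
proof -
  let ?P = "measure_pmf.prob (random_digraph m phi p)"
  let ?nu = "\<lambda>A. real (nu {0..<m} (mutual_graph A))"
  obtain T where T: "real T + 1 \<le> D * ln (real m)" and tail: "?P {A. real T < ?nu A} \<le> 1 / real m ^ 2"
    using nu_tail_threshold[where p = p and r = r and phi = phi, OF p r m] unfolding D_def by auto
  have "measure_pmf.expectation (random_digraph m phi p) ?nu \<le> real T + real m * ?P {A. real T < ?nu A}"
    using nu_le_card[of "{0..<m}"] by (intro expectation_le_threshold_plus_tail) auto
  also have "\<dots> \<le> real T + real m * (1 / real m ^ 2)"
    using tail by (intro add_left_mono mult_left_mono) auto
  also have "\<dots> \<le> real T + 1"
    using m by (simp add: power2_eq_square field_simps)
  finally show "measure_pmf.expectation (random_digraph m phi p) ?nu \<le> D * ln (real m)"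
    using T by linarith
  have "1 - 1 / real m ^ 2 \<le> 1 - ?P {A. real T < ?nu A}"
    using tail by simp
  also have "\<dots> = ?P {A. ?nu A \<le> real T}"
    using measure_pmf.prob_compl[of "{A. real T < ?nu A}" "random_digraph m phi p"]
    by (simp add: Compl_eq_Diff_UNIV[symmetric] Collect_neg_eq[symmetric] not_less)
  also have "\<dots> \<le> ?P {A. ?nu A \<le> D * ln (real m)}"
    using T by (intro measure_pmf.finite_measure_mono) auto
  finally show "1 - 1 / real m ^ 2 \<le> ?P {A. ?nu A \<le> D * ln (real m)}" .
qed

theorem mainTheorem6:
  fixes p :: "'g::finite \<Rightarrow> 'g \<Rightarrow> real"
  assumes "\<And>j k. 0 \<le> p j k \<and> p j k \<le> 1"
  shows "\<exists>D>0.
    (\<forall>m\<ge>2. \<forall>phi :: nat \<Rightarrow> 'g.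
       measure_pmf.expectation (random_digraph m phi p)
         (\<lambda>A. real (nu {0..<m} (mutual_graph A))) \<le> D * ln (real m)) \<and>
    (\<forall>phis :: nat \<Rightarrow> nat \<Rightarrow> 'g.
       (\<lambda>m. measure_pmf.prob (random_digraph m (phis m) p)
              {A. real (nu {0..<m} (mutual_graph A)) \<le> D * ln (real m)}) \<longlonglongrightarrow> 1)"
proof -
  obtain r where r: "0 < r" "r < 1" "\<And>j k. 0 < p j k * p k j \<Longrightarrow> 1 - p j k * p k j \<le> r"
    using obtain_mutual_gap[of p] by blast
  define D where "D = CARD('g \<times> 'g) * (3 / - ln r + 4) + 2"
  have "0 \<le> 3 / - ln r"
    using r by (intro divide_nonneg_pos) auto
  then have "D > 0"
    unfolding D_def by (intro add_nonneg_pos mult_nonneg_nonneg; (linarith | simp))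
  note bounds = nu_log_bounds[where p = p and r = r, OF assms r(3,1,2), folded D_def]
  have "(\<lambda>m. 1 - 1 / real m ^ 2) \<longlonglongrightarrow> 1"
    using tendsto_diff[OF tendsto_const tendsto_power[OF lim_inverse_n', of 2]]
    by (simp add: power_one_over)
  then have "(\<lambda>m. measure_pmf.prob (random_digraph m (phis m) p)
      {A. real (nu {0..<m} (mutual_graph A)) \<le> D * ln (real m)}) \<longlonglongrightarrow> 1"
    for phis :: "nat \<Rightarrow> nat \<Rightarrow> 'g"
    by (rule tendsto_sandwich[rotated 2, OF _ tendsto_const])
      (auto intro!: eventually_sequentiallyI[of 2] bounds(2))
  with \<open>D > 0\<close> bounds(1) show ?thesis
    by blast
qed

end
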